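(* Let $I$ be a BI instance with matroid intersection constraint $(\mathcal I_1,\mathcal I_2)$, $0<\varepsilon<\tfrac12$, $\tfrac{\mathrm{OPT}(I)}{2}\le\alpha\le\mathrm{OPT}(I)$, and $r\in[\log_{1-\varepsilon}(\varepsilon/2)+1]$. Let $U\subseteq\mathcal K_r(\alpha)$, $\Delta\in\mathcal M_{\le q(\varepsilon)}$, and let $B$ be a minimum basis of $[(E,\mathcal I_2)\cap U]_{\le q(\varepsilon)}$ with respect to $c$. Let $a\in(U\cap\Delta)\setminus B$. Then there is $b\in B\setminus\Delta$ such that $b$ is a shift to $a$ for $\Delta$ or $b$ is a semi-shift to $a$ for $\Delta$.
   Context: A BI instance is $I=(E,\mathcal C,c,p,\beta)$ where $\mathcal C=(\mathcal I_1,\mathcal I_2)$ with $(E,\mathcal I_1),(E,\mathcal I_2)$ matroids, $c,p:E\to\mathbb R_{\ge0}$, $\beta\ge0$; $\mathcal M=\mathcal I_1\cap\mathcal I_2$; a solution is $S\in\mathcal M$ with $c(S)\le\beta$, and $\mathrm{OPT}(I)$ is the maximum of $p(S)=\sum_{e\in S}p(e)$ over solutions. $q(\varepsilon)=\lceil\varepsilon^{-1/\varepsilon}\rceil$; $\mathcal M_{\le q(\varepsilon)}=\{A\in\mathcal M:|A|\le q(\varepsilon)\}$; $[k]=\{1,\dots,\lfloor k\rfloor\}$; $A+e=A\cup\{e\}$, $A-e=A\setminus\{e\}$. Profit class: $\mathcal K_r(\alpha)=\{e\in E: \tfrac{p(e)}{2\alpha}\in((1-\varepsilon)^r,(1-\varepsilon)^{r-1}]\}$.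 $[(E,\mathcal I_2)\cap U]_{\le q}$ is the matroid with ground set $U$ and independent sets $\{A\in\mathcal I_2: A\subseteq U, |A|\le q\}$; a minimum basis w.r.t. $c$ is a basis of minimum total cost. For $\Delta\in\mathcal M_{\le q(\varepsilon)}$, $a\in\Delta\cap\mathcal K_r(\alpha)$ and $b\in\mathcal K_r(\alpha)\setminus\Delta$: $b$ is a shift to $a$ for $\Delta$ if $c(b)\le c(a)$ and $\Delta-a+b\in\mathcal M_{\le q(\varepsilon)}$; $b$ is a semi-shift to $a$ for $\Delta$ if $c(b)\le c(a)$, $\Delta-a+b\in\mathcal I_2$ and $\Delta-a+b\notin\mathcal I_1$. *)

theory Defs
  imports Complex_Main
begin

definition matroid :: "'a set \<Rightarrow> 'a set set \<Rightarrow> bool" where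
  "matroid E \<I> \<longleftrightarrow> finite E \<and> (\<forall>A\<in>\<I>. A \<subseteq> E) \<and> {} \<in> \<I> \<and>
     (\<forall>A B. A \<in> \<I> \<longrightarrow> B \<subseteq> A \<longrightarrow> B \<in> \<I>) \<and>
     (\<forall>A B. A \<in> \<I> \<longrightarrow> B \<in> \<I> \<longrightarrow> card A < card B \<longrightarrow> (\<exists>e\<in>B - A. insert e A \<in> \<I>))"

definition BI_instance :: "'a set \<Rightarrow> 'a set set \<Rightarrow> 'a set set \<Rightarrow> ('a \<Rightarrow> real) \<Rightarrow> ('a \<Rightarrow> real) \<Rightarrow> real \<Rightarrow> bool" where
  "BI_instance E \<I>1 \<I>2 c p \<beta> \<longleftrightarrow> matroid E \<I>1 \<and> matroid E \<I>2 \<and>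
     (\<forall>e\<in>E. c e \<ge> 0) \<and> (\<forall>e\<in>E. p e \<ge> 0) \<and> \<beta> \<ge> 0"

definition BI_solution :: "'a set set \<Rightarrow> 'a set set \<Rightarrow> ('a \<Rightarrow> real) \<Rightarrow> real \<Rightarrow> 'a set \<Rightarrow> bool" where
  "BI_solution \<I>1 \<I>2 c \<beta> S \<longleftrightarrow> S \<in> \<I>1 \<inter> \<I>2 \<and> sum c S \<le> \<beta>"

definition BI_OPT :: "'a set set \<Rightarrow> 'a set set \<Rightarrow> ('a \<Rightarrow> real) \<Rightarrow> ('a \<Rightarrow> real) \<Rightarrow> real \<Rightarrow> real" where
  "BI_OPT \<I>1 \<I>2 c p \<beta> = Max (sum p ` {S. BI_solution \<I>1 \<I>2 c \<beta> S})"

definition q_eps :: "real \<Rightarrow> nat" where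
  "q_eps \<epsilon> = nat \<lceil>\<epsilon> powr (- 1 / \<epsilon>)\<rceil>"

definition M_le :: "'a set set \<Rightarrow> 'a set set \<Rightarrow> nat \<Rightarrow> 'a set set" where
  "M_le \<I>1 \<I>2 q = {A \<in> \<I>1 \<inter> \<I>2. card A \<le> q}"

definition profit_class :: "'a set \<Rightarrow> ('a \<Rightarrow> real) \<Rightarrow> real \<Rightarrow> real \<Rightarrow> nat \<Rightarrow> 'a set" where
  "profit_class E p \<epsilon> \<alpha> r =
     {e \<in> E. p e / (2 * \<alpha>) \<in> {(1 - \<epsilon>) ^ r <.. (1 - \<epsilon>) ^ (r - 1)}}"

text \<open>Independent sets of the matroid [(E,I2) \<inter> U]_{<= q}.\<close>
definition restr_trunc :: "'a set set \<Rightarrow> 'a set \<Rightarrow> nat \<Rightarrow> 'a set set" where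
  "restr_trunc \<I>2 U q = {A \<in> \<I>2. A \<subseteq> U \<and> card A \<le> q}"

definition is_basis :: "'a set set \<Rightarrow> 'a set \<Rightarrow> bool" where
  "is_basis \<F> X \<longleftrightarrow> X \<in> \<F> \<and> (\<forall>Y\<in>\<F>. X \<subseteq> Y \<longrightarrow> Y = X)"

definition is_min_basis :: "'a set set \<Rightarrow> ('a \<Rightarrow> real) \<Rightarrow> 'a set \<Rightarrow> bool" where
  "is_min_basis \<F> c X \<longleftrightarrow> is_basis \<F> X \<and> (\<forall>Y. is_basis \<F> Y \<longrightarrow> sum c X \<le> sum c Y)"

definition is_shift :: "'a set set \<Rightarrow> 'a set set \<Rightarrow> ('a \<Rightarrow> real) \<Rightarrow> nat \<Rightarrow> 'a set \<Rightarrow> 'a set \<Rightarrow> 'a \<Rightarrow> 'a \<Rightarrow> bool" where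
  "is_shift \<I>1 \<I>2 c q K \<Delta> a b \<longleftrightarrow>
     \<Delta> \<in> M_le \<I>1 \<I>2 q \<and> a \<in> \<Delta> \<inter> K \<and> b \<in> K - \<Delta> \<and>
     c b \<le> c a \<and> insert b (\<Delta> - {a}) \<in> M_le \<I>1 \<I>2 q"

definition is_semi_shift :: "'a set set \<Rightarrow> 'a set set \<Rightarrow> ('a \<Rightarrow> real) \<Rightarrow> nat \<Rightarrow> 'a set \<Rightarrow> 'a set \<Rightarrow> 'a \<Rightarrow> 'a \<Rightarrow> bool" where
  "is_semi_shift \<I>1 \<I>2 c q K \<Delta> a b \<longleftrightarrow>
     \<Delta> \<in> M_le \<I>1 \<I>2 q \<and> a \<in> \<Delta> \<inter> K \<and> b \<in> K - \<Delta> \<and>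
     c b \<le> c a \<and> insert b (\<Delta> - {a}) \<in> \<I>2 \<and> insert b (\<Delta> - {a}) \<notin> \<I>1"

end

theory Submission
  imports Defs
begin

text \<open>
  Let \<open>L\<close> be the elements of the minimum basis \<open>B\<close> costing at most \<open>c a\<close>. If no \<open>b \<in> L - \<Delta>\<close>
  could replace \<open>a\<close> in \<open>\<Delta>\<close> keeping \<open>\<I>\<^sub>2\<close>-independence, then \<open>\<Delta> - a\<close> would be a maximal
  independent subset of \<open>(\<Delta> - a) \<union> L\<close>; extending \<open>L\<close> by elements of \<open>\<Delta>\<close> to the size of \<open>\<Delta>\<close>
  must then use \<open>a\<close>, so \<open>L + a\<close> is independent and small enough to lie in the truncated
  restriction. This contradicts the greedy property of minimum bases: exchanging \<open>a\<close> for a basis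
  element outside \<open>L\<close> would produce a strictly cheaper basis. Hence some \<open>b \<in> B - \<Delta>\<close> with
  \<open>c b \<le> c a\<close> has \<open>\<Delta> - a + b \<in> \<I>\<^sub>2\<close>, a shift or a semi-shift according to \<open>\<I>\<^sub>1\<close>.
\<close>

lemma matroid_finite_ground: "matroid E \<I> \<Longrightarrow> finite E"
  by (simp add: matroid_def)

lemma matroid_indep_subset_ground: "matroid E \<I> \<Longrightarrow> A \<in> \<I> \<Longrightarrow> A \<subseteq> E"
  by (simp add: matroid_def)

lemma matroid_empty_indep: "matroid E \<I> \<Longrightarrow> {} \<in> \<I>"
  by (simp add: matroid_def)

lemma matroid_indep_subset: "matroid E \<I> \<Longrightarrow> A \<in> \<I> \<Longrightarrow> B \<subseteq> A \<Longrightarrow> B \<in> \<I>"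
  unfolding matroid_def by (elim conjE) blast

lemma matroid_augment:
  "matroid E \<I> \<Longrightarrow> A \<in> \<I> \<Longrightarrow> B \<in> \<I> \<Longrightarrow> card A < card B \<Longrightarrow> \<exists>e\<in>B - A. insert e A \<in> \<I>"
  unfolding matroid_def by (elim conjE) blast

lemma matroid_indep_finite: "matroid E \<I> \<Longrightarrow> A \<in> \<I> \<Longrightarrow> finite A"
  by (meson matroid_finite_ground matroid_indep_subset_ground finite_subset)

lemma card_insert_Diff_singleton:
  "finite A \<Longrightarrow> x \<in> A \<Longrightarrow> b \<notin> A \<Longrightarrow> card (insert b (A - {x})) = card A"
  by (metis DiffD1 card.remove card_insert_disjoint finite_Diff)

lemma matroid_restr_trunc:
  assumes "matroid E \<I>"
  shows "matroid (E \<inter> U) (restr_trunc \<I> U q)"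
  unfolding matroid_def
proof (intro conjI allI impI ballI)
  show "finite (E \<inter> U)" using matroid_finite_ground[OF assms] by blast
  show "{} \<in> restr_trunc \<I> U q"
    using matroid_empty_indep[OF assms] unfolding restr_trunc_def by simp
next
  fix A assume "A \<in> restr_trunc \<I> U q"
  then show "A \<subseteq> E \<inter> U"
    using matroid_indep_subset_ground[OF assms] unfolding restr_trunc_def by blast
next
  fix A B assume A: "A \<in> restr_trunc \<I> U q" and "B \<subseteq> A"
  moreover have "card B \<le> card A"
    using A \<open>B \<subseteq> A\<close> matroid_indep_finite[OF assms] card_mono unfolding restr_trunc_def by blast
  ultimately show "B \<in> restr_trunc \<I> U q"
    using matroid_indep_subset[OF assms] unfolding restr_trunc_def by auto
next
  fix A B assume A: "A \<in> restr_trunc \<I> U q" and B: "B \<in> restr_trunc \<I> U q"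
    and less: "card A < card B"
  then obtain e where e: "e \<in> B - A" "insert e A \<in> \<I>"
    using matroid_augment[OF assms] unfolding restr_trunc_def by blast
  have "finite A" using A matroid_indep_finite[OF assms] unfolding restr_trunc_def by blast
  then have "card (insert e A) \<le> q" using e less B unfolding restr_trunc_def by simp
  then show "\<exists>e\<in>B - A. insert e A \<in> restr_trunc \<I> U q"
    using e A B unfolding restr_trunc_def by blast
qed

lemma matroid_augment_to_card:
  assumes "matroid E \<I>" "A \<in> \<I>" "B \<in> \<I>" "card A \<le> card B"
  shows "\<exists>Z\<in>\<I>. A \<subseteq> Z \<and> Z \<subseteq> A \<union> B \<and> card Z = card B"
  using assms(2-)
proof (induction "card B - card A" arbitrary: A)
  case 0
  then show ?case by (intro bexI[of _ A]) auto
next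
  case (Suc n)
  then have "card A < card B" by simp
  then obtain e where e: "e \<in> B - A" "insert e A \<in> \<I>"
    using matroid_augment[OF assms(1) Suc.prems(1,2)] by blast
  have card_eA: "card (insert e A) = Suc (card A)"
    using e matroid_indep_finite[OF assms(1) Suc.prems(1)] by simp
  then obtain Z where "Z \<in> \<I>" "insert e A \<subseteq> Z" "Z \<subseteq> insert e A \<union> B" "card Z = card B"
    using Suc.hyps(1)[of "insert e A"] Suc.hyps(2) e Suc.prems by force
  then show ?case using e by (intro bexI[of _ Z]) auto
qed

lemma basis_indep: "is_basis \<F> B \<Longrightarrow> B \<in> \<F>"
  unfolding is_basis_def by blast

lemma basis_maximal: "is_basis \<F> B \<Longrightarrow> Y \<in> \<F> \<Longrightarrow> B \<subseteq> Y \<Longrightarrow> Y = B"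
  unfolding is_basis_def by blast

lemma min_basis_basis: "is_min_basis \<F> c B \<Longrightarrow> is_basis \<F> B"
  unfolding is_min_basis_def by blast

lemma min_basis_sum_le: "is_min_basis \<F> c B \<Longrightarrow> is_basis \<F> Y \<Longrightarrow> sum c B \<le> sum c Y"
  unfolding is_min_basis_def by blast

lemma matroid_basis_of_card:
  assumes "matroid E \<F>" "is_basis \<F> B" "X \<in> \<F>" "card X = card B"
  shows "is_basis \<F> X"
  unfolding is_basis_def
proof (intro conjI ballI impI)
  fix Y assume Y: "Y \<in> \<F>" "X \<subseteq> Y"
  show "Y = X"
  proof (rule ccontr)
    assume "Y \<noteq> X"
    then have "X \<subset> Y" using Y(2) by blast
    then have "card X < card Y"
      by (rule psubset_card_mono[OF matroid_indep_finite[OF assms(1) Y(1)]])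
    then have "card B < card Y" using assms(4) by simp
    then obtain e where "e \<in> Y - B" "insert e B \<in> \<F>"
      using matroid_augment[OF assms(1) basis_indep[OF assms(2)] Y(1)] by blast
    then show False using basis_maximal[OF assms(2), of "insert e B"] by blast
  qed
qed (fact assms(3))

lemma min_basis_exchange_cost:
  assumes "matroid E \<F>" "is_min_basis \<F> c B" "x \<in> B" "a \<notin> B" "insert a (B - {x}) \<in> \<F>"
  shows "c x \<le> c a"
proof -
  have basis: "is_basis \<F> B" using min_basis_basis[OF assms(2)] .
  have fin: "finite B" using matroid_indep_finite[OF assms(1) basis_indep[OF basis]] .
  have "card (insert a (B - {x})) = card B"
    using card_insert_Diff_singleton[OF fin assms(3,4)] .
  then have "is_basis \<F> (insert a (B - {x}))"
    using matroid_basis_of_card[OF assms(1) basis assms(5)] by simp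
  then have "sum c B \<le> sum c (insert a (B - {x}))"
    by (rule min_basis_sum_le[OF assms(2)])
  also have "\<dots> = c a + sum c B - c x"
    using assms(3,4) fin by (simp add: sum_diff1)
  finally show ?thesis by simp
qed

lemma min_basis_no_cheap_extension:
  assumes "matroid E \<F>" "is_min_basis \<F> c B" "a \<notin> B"
  shows "insert a {b \<in> B. c b \<le> c a} \<notin> \<F>"
proof
  define L where "L = {b \<in> B. c b \<le> c a}"
  assume aL: "insert a {b \<in> B. c b \<le> c a} \<in> \<F>"
  then have aL: "insert a L \<in> \<F>" unfolding L_def .
  have basis: "is_basis \<F> B" using min_basis_basis[OF assms(2)] .
  have BF: "B \<in> \<F>" using basis_indep[OF basis] .
  have fin: "finite B" using matroid_indep_finite[OF assms(1) BF] .
  have LB: "L \<subseteq> B" unfolding L_def by blast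
  show False
  proof (cases "L = B")
    case True
    then show False using basis_maximal[OF basis aL] assms(3) by blast
  next
    case False
    then have "card L < card B" using LB fin by (simp add: psubset_card_mono)
    then have "card (insert a L) \<le> card B"
      using LB fin assms(3) by (simp add: finite_subset subset_iff card_insert_if)
    then obtain Z where Z: "Z \<in> \<F>" "insert a L \<subseteq> Z" "Z \<subseteq> insert a L \<union> B" "card Z = card B"
      using matroid_augment_to_card[OF assms(1) aL BF] by blast
    have "\<not> B \<subseteq> Z"
    proof
      assume "B \<subseteq> Z"
      then have "insert a B \<subseteq> Z" using Z(2) by blast
      then have "card (insert a B) \<le> card Z"
        using card_mono[OF matroid_indep_finite[OF assms(1) Z(1)]] by blast
      then show False using Z(4) fin assms(3) by simp
    qed
    then obtain x where x: "x \<in> B" "x \<notin> Z" by blast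
    have "Z \<subseteq> insert a (B - {x})" using Z(3) LB x by blast
    moreover have "card (insert a (B - {x})) = card B"
      using card_insert_Diff_singleton[OF fin x(1) assms(3)] .
    ultimately have "Z = insert a (B - {x})"
      using Z(4) fin by (simp add: card_seteq)
    then have "c x \<le> c a" using min_basis_exchange_cost[OF assms(1,2) x(1) assms(3)] Z(1) by simp
    then show False using x Z(2) unfolding L_def by blast
  qed
qed

lemma indep_card_le_of_maximal:
  assumes "matroid E \<I>" "D \<in> \<I>" "\<forall>b\<in>L - D. insert b D \<notin> \<I>" "X \<in> \<I>" "X \<subseteq> D \<union> L"
  shows "card X \<le> card D"
proof (rule ccontr)
  assume "\<not> card X \<le> card D"
  then obtain e where "e \<in> X - D" "insert e D \<in> \<I>"
    using matroid_augment[OF assms(1,2,4)] by (auto simp: not_le)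
  then show False using assms(3,5) by blast
qed

lemma indep_insert_of_no_exchange:
  assumes "matroid E \<I>" "\<Delta> \<in> \<I>" "a \<in> \<Delta>" "L \<in> \<I>"
    and no_exchange: "\<forall>b\<in>L - (\<Delta> - {a}). insert b (\<Delta> - {a}) \<notin> \<I>"
  shows "insert a L \<in> \<I>"
proof -
  define D where "D = \<Delta> - {a}"
  have D: "D \<in> \<I>" using matroid_indep_subset[OF assms(1,2)] unfolding D_def by blast
  have card_D: "card \<Delta> = Suc (card D)"
    using card.remove[OF matroid_indep_finite[OF assms(1,2)] assms(3)] unfolding D_def .
  note rank_bound = indep_card_le_of_maximal[OF assms(1) D no_exchange[folded D_def]]
  have "card L \<le> card \<Delta>" using rank_bound[OF assms(4)] card_D by simp
  then obtain Z where Z: "Z \<in> \<I>" "L \<subseteq> Z" "Z \<subseteq> L \<union> \<Delta>" "card Z = card \<Delta>"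
    using matroid_augment_to_card[OF assms(1,4,2)] by blast
  have "a \<in> Z"
  proof (rule ccontr)
    assume "a \<notin> Z"
    then have "Z \<subseteq> D \<union> L" using Z(3) unfolding D_def by blast
    then show False using rank_bound[OF Z(1)] Z(4) card_D by simp
  qed
  then show ?thesis using matroid_indep_subset[OF assms(1) Z(1)] Z(2) by blast
qed

lemma min_basis_exchange_into_indep:
  assumes "matroid E \<I>" "\<Delta> \<in> \<I>" "card \<Delta> \<le> q"
    and B: "is_min_basis (restr_trunc \<I> U q) c B" and a: "a \<in> (U \<inter> \<Delta>) - B"
  shows "\<exists>b\<in>B - \<Delta>. c b \<le> c a \<and> insert b (\<Delta> - {a}) \<in> \<I>"
proof (rule ccontr)
  assume no_exchange: "\<not> ?thesis"
  define L where "L = {b \<in> B. c b \<le> c a}"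
  have B_props: "B \<in> \<I>" "B \<subseteq> U"
    using B unfolding is_min_basis_def is_basis_def restr_trunc_def by auto
  have LB: "L \<subseteq> B" unfolding L_def by blast
  have L: "L \<in> \<I>" using matroid_indep_subset[OF assms(1) B_props(1) LB] .
  have no_exchange_L: "\<forall>b\<in>L - (\<Delta> - {a}). insert b (\<Delta> - {a}) \<notin> \<I>"
    using no_exchange a unfolding L_def by blast
  have aL: "insert a L \<in> \<I>"
    using indep_insert_of_no_exchange[OF assms(1,2) _ L no_exchange_L] a by blast
  have "card L \<le> card (\<Delta> - {a})"
    using indep_card_le_of_maximal[OF assms(1) _ no_exchange_L L] matroid_indep_subset[OF assms(1,2)]
    by blast
  moreover have "card (insert a L) = Suc (card L)"
    using a LB matroid_indep_finite[OF assms(1) L] by (auto simp: card_insert_if)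
  moreover have "card \<Delta> = Suc (card (\<Delta> - {a}))"
    using card.remove[OF matroid_indep_finite[OF assms(1,2)]] a by blast
  ultimately have "card (insert a L) \<le> q" using assms(3) by simp
  then have "insert a L \<in> restr_trunc \<I> U q"
    using aL a LB B_props(2) unfolding restr_trunc_def by blast
  then show False
    using min_basis_no_cheap_extension[OF matroid_restr_trunc[OF assms(1)] B] a
    unfolding L_def by blast
qed

theorem mainTheorem12:
  fixes E :: "'a set" and \<I>1 \<I>2 :: "'a set set" and c p :: "'a \<Rightarrow> real"
    and \<beta> \<epsilon> \<alpha> :: real and r :: nat and U \<Delta> B :: "'a set" and a :: 'a
  assumes inst: "BI_instance E \<I>1 \<I>2 c p \<beta>"
    and eps: "0 < \<epsilon>" "\<epsilon> < 1 / 2"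
    and alpha: "BI_OPT \<I>1 \<I>2 c p \<beta> / 2 \<le> \<alpha>" "\<alpha> \<le> BI_OPT \<I>1 \<I>2 c p \<beta>"
    and r: "1 \<le> r" "real r \<le> log (1 - \<epsilon>) (\<epsilon> / 2) + 1"
    and U: "U \<subseteq> profit_class E p \<epsilon> \<alpha> r"
    and Delta: "\<Delta> \<in> M_le \<I>1 \<I>2 (q_eps \<epsilon>)"
    and B: "is_min_basis (restr_trunc \<I>2 U (q_eps \<epsilon>)) c B"
    and a: "a \<in> (U \<inter> \<Delta>) - B"
  shows "\<exists>b \<in> B - \<Delta>.
           is_shift \<I>1 \<I>2 c (q_eps \<epsilon>) (profit_class E p \<epsilon> \<alpha> r) \<Delta> a b \<or>
           is_semi_shift \<I>1 \<I>2 c (q_eps \<epsilon>) (profit_class E p \<epsilon> \<alpha> r) \<Delta> a b"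
proof -
  \<comment> \<open>Only the matroid structure of \<open>\<I>\<^sub>2\<close> matters.\<close>
  have m2: "matroid E \<I>2" using inst unfolding BI_instance_def by blast
  have Delta_props: "\<Delta> \<in> \<I>2" "card \<Delta> \<le> q_eps \<epsilon>" using Delta unfolding M_le_def by auto
  obtain b where b: "b \<in> B - \<Delta>" "c b \<le> c a" "insert b (\<Delta> - {a}) \<in> \<I>2"
    using min_basis_exchange_into_indep[OF m2 Delta_props B a] by blast
  have "b \<in> U" using b(1) B unfolding is_min_basis_def is_basis_def restr_trunc_def by blast
  then have ab: "a \<in> \<Delta> \<inter> profit_class E p \<epsilon> \<alpha> r" "b \<in> profit_class E p \<epsilon> \<alpha> r - \<Delta>"
    using a b(1) U by auto
  have "card (insert b (\<Delta> - {a})) \<le> q_eps \<epsilon>"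
    using card_insert_Diff_singleton[OF matroid_indep_finite[OF m2 Delta_props(1)]] a b(1)
      Delta_props(2) by auto
  then show ?thesis
    using b ab Delta unfolding is_shift_def is_semi_shift_def M_le_def by blast
qed

end
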